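(* Let $f$ be a probability density on $\mathbb{R}$ with $f\in\mathbb{L}_2$ and $f(x)=f(-x)$ for all $x$. Let $\Theta$ be a compact subset of $(0,1/2)\times(\mathbb{R}^2\setminus\Delta)$, $\Delta=\{(x,x):x\in\mathbb{R}\}$, let $\theta_0=(p_0,\alpha_0,\beta_0)\in\Theta$ and $g(x)=p_0f(x-\alpha_0)+(1-p_0)f(x-\beta_0)$. Let $W$ be a probability measure on $\mathbb{R}$ which is absolutely continuous with respect to Lebesgue measure and whose support is $\mathbb{R}$. For $\theta\in\Theta$ define $$S(\theta)=\int_{\mathbb{R}}\left(\mathrm{Im}\left(\frac{g^*(u)}{M(\theta,u)}\right)\right)^2dW(u),$$ where $M(\theta,u)=pe^{iu\alpha}+(1-p)e^{iu\beta}$ for $\theta=(p,\alpha,\beta)$. Then $S$ is a contrast function: for all $\theta\in\Theta$, $S(\theta)\ge 0$, and $S(\theta)=0$ if and only if $\theta=\theta_0$.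
   Context: $f^*(u)=\int_{\mathbb{R}}e^{ixu}f(x)\,dx$ denotes the Fourier transform. *)

theory Defs
  imports "HOL-Analysis.Analysis" "HOL-Probability.Probability"
begin

definition fourier :: "(real \<Rightarrow> real) \<Rightarrow> real \<Rightarrow> complex" where
  "fourier f u = (LINT x|lborel. cis (x * u) * complex_of_real (f x))"

definition prob_density :: "(real \<Rightarrow> real) \<Rightarrow> bool" where
  "prob_density f \<longleftrightarrow> f \<in> borel_measurable lborel \<and> (\<forall>x. 0 \<le> f x)
     \<and> integrable lborel f \<and> (LINT x|lborel. f x) = 1"

definition measure_support :: "real measure \<Rightarrow> real set" where
  "measure_support W = {x. \<forall>e>0. 0 < emeasure W (ball x e)}"

definition mixM :: "real \<times> real \<times> real \<Rightarrow> real \<Rightarrow> complex" where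
  "mixM \<theta> u = (case \<theta> of (p, a, b) \<Rightarrow>
      complex_of_real p * cis (u * a) + complex_of_real (1 - p) * cis (u * b))"

definition contrastS :: "real measure \<Rightarrow> (real \<Rightarrow> real) \<Rightarrow> real \<times> real \<times> real \<Rightarrow> real" where
  "contrastS W g \<theta> = (LINT u|W. (Im (fourier g u / mixM \<theta> u))\<^sup>2)"

end

theory Submission
  imports Defs
begin

text \<open>
  Since f is even, its Fourier transform f* is real, and the transform of the mixture g is
  f* times M(\<theta>0, -); this gives S(\<theta>0) = 0. Conversely, the integrand of S is
  continuous and W has full support, so S(\<theta>) = 0 forces Im (f* M(\<theta>0, u) / M(\<theta>, u)) = 0
  for all u; as f* does not vanish near 0, M(\<theta>0, u) cnj (M(\<theta>, u)) is real on a
  neighbourhood of 0. That product is a trigonometric polynomial, and exponentials with distinct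
  frequencies are linearly independent on every open set, so the coefficient of each frequency
  \<plusminus>(x i - y j) vanishes, x and y being the atoms of the two mixtures. Comparing the
  extreme frequencies shows that the two mixtures coincide, and p < 1/2 excludes the label swap.
\<close>

lemma has_vector_derivative_cis_linear:
  "((\<lambda>u. cis (w * u)) has_vector_derivative \<i> * complex_of_real w * cis (w * u)) (at u)"
  unfolding cis_conv_exp
  by (auto intro!: derivative_eq_intros simp: has_vector_derivative_complex_iff Re_exp Im_exp algebra_simps)

lemma cis_sum_vanishing_on_open_imp_coeff_zero:
  fixes c :: "real \<Rightarrow> complex"
  assumes "finite \<Omega>" "open S" "u0 \<in> S"
    and "\<forall>u\<in>S. (\<Sum>w\<in>\<Omega>. c w * cis (w * u)) = 0"
    and "w \<in> \<Omega>"
  shows "c w = 0"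
  using assms
proof (induction \<Omega> arbitrary: c w rule: finite_induct)
  case empty
  then show ?case by simp
next
  case (insert w0 \<Omega>)
  let ?F = "\<lambda>c u. \<Sum>w\<in>insert w0 \<Omega>. c w * cis (w * u)"
  \<comment> \<open>Differentiating the sum and subtracting \<open>\<i> w0\<close> times it removes the frequency w0.\<close>
  define c' where "c' w = \<i> * complex_of_real (w - w0) * c w" for w
  have "(\<Sum>w\<in>\<Omega>. c' w * cis (w * u)) = 0" if "u \<in> S" for u
  proof -
    have "(?F c has_vector_derivative
            (\<Sum>w\<in>insert w0 \<Omega>. c w * (\<i> * complex_of_real w * cis (w * u)))) (at u)"
      by (intro has_vector_derivative_sum has_vector_derivative_mult_right
          has_vector_derivative_cis_linear)
    moreover have "(?F c has_vector_derivative 0) (at u)"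
      by (rule has_vector_derivative_transform_within_open[OF has_vector_derivative_const \<open>open S\<close> that])
         (use insert.prems(3) in auto)
    ultimately have "?F (\<lambda>w. \<i> * complex_of_real w * c w) u = 0"
      using vector_derivative_unique_at by (simp add: ac_simps)
    moreover have "?F c u = 0" using insert.prems(3) that by blast
    ultimately have "?F (\<lambda>w. \<i> * complex_of_real w * c w) u - \<i> * complex_of_real w0 * ?F c u = 0"
      by simp
    then show ?thesis
      using insert.hyps by (simp add: c'_def sum_distrib_left algebra_simps sum_subtractf[symmetric])
  qed
  then have c'_zero: "c' w = 0" if "w \<in> \<Omega>" for w
    using insert.IH insert.prems(1,2) that by blast
  have "c w = 0" if "w \<in> \<Omega>" for w
    using c'_zero[OF that] insert.hyps(2) that by (auto simp: c'_def)
  then have "(\<Sum>w\<in>\<Omega>. c w * cis (w * u0)) = 0"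
    by simp
  moreover have "?F c u0 = 0"
    using insert.prems(2,3) by blast
  ultimately have "c w0 * cis (w0 * u0) = 0"
    using insert.hyps by simp
  then show ?case
    using insert.prems(4) \<open>\<And>w. w \<in> \<Omega> \<Longrightarrow> c w = 0\<close> by auto
qed

text \<open>
  For \<phi> u = (\<Sum>i. A i cis (x i u)) and \<psi> u = (\<Sum>j. B j cis (y j u)), this is the coefficient
  of cis (w u) in \<phi> cnj \<psi> - cnj \<phi> \<psi> = 2 \<i> Im (\<phi> cnj \<psi>).
\<close>
definition cross_coeff ::
    "('i \<Rightarrow> real) \<Rightarrow> ('i \<Rightarrow> real) \<Rightarrow> ('j \<Rightarrow> real) \<Rightarrow> ('j \<Rightarrow> real) \<Rightarrow> real \<Rightarrow> real" where
  "cross_coeff x A y B w =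
     (\<Sum>(i, j) \<in> {(i, j). x i - y j = w}. A i * B j) - (\<Sum>(i, j) \<in> {(i, j). y j - x i = w}. A i * B j)"

lemma sum_cis_group:
  fixes \<omega> :: "'k \<Rightarrow> real"
  assumes "finite K" "finite \<Omega>" "\<omega> ` K \<subseteq> \<Omega>"
  shows "(\<Sum>w\<in>\<Omega>. complex_of_real (\<Sum>k\<in>{k\<in>K. \<omega> k = w}. a k) * cis (w * u))
         = (\<Sum>k\<in>K. complex_of_real (a k) * cis (\<omega> k * u))"
proof -
  have "(\<Sum>w\<in>\<Omega>. complex_of_real (\<Sum>k\<in>{k\<in>K. \<omega> k = w}. a k) * cis (w * u))
        = (\<Sum>w\<in>\<Omega>. \<Sum>k\<in>{k\<in>K. \<omega> k = w}. complex_of_real (a k) * cis (\<omega> k * u))"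
    by (simp add: sum_distrib_right)
  also have "\<dots> = (\<Sum>k\<in>K. complex_of_real (a k) * cis (\<omega> k * u))"
    by (rule sum.group[OF assms])
  finally show ?thesis .
qed

lemma cross_coeff_eq_0_if_Im_vanishes_on_open:
  fixes x A :: "'i::finite \<Rightarrow> real" and y B :: "'j::finite \<Rightarrow> real"
  assumes "open S" "u0 \<in> S"
    and Im0: "\<forall>u\<in>S. Im ((\<Sum>i\<in>UNIV. A i * cis (x i * u)) * cnj (\<Sum>j\<in>UNIV. B j * cis (y j * u))) = 0"
  shows "cross_coeff x A y B w = 0"
proof -
  define K where "K = (UNIV :: ('i \<times> 'j) set)"
  define \<omega> where "\<omega> = (\<lambda>(i, j). x i - y j)"
  define a where "a = (\<lambda>(i, j). A i * B j)"
  define \<Omega> where "\<Omega> = \<omega> ` K \<union> uminus ` \<omega> ` K"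
  have fin: "finite K" "finite \<Omega>"
    by (simp_all add: K_def \<Omega>_def)
  have cross: "cross_coeff x A y B w =
      (\<Sum>k\<in>{k\<in>K. \<omega> k = w}. a k) - (\<Sum>k\<in>{k\<in>K. - \<omega> k = w}. a k)" for w
    by (simp add: cross_coeff_def K_def \<omega>_def a_def case_prod_unfold)
  have "(\<Sum>w\<in>\<Omega>. complex_of_real (cross_coeff x A y B w) * cis (w * u)) = 0" if "u \<in> S" for u
  proof -
    define z where "z = (\<Sum>i\<in>UNIV. A i * cis (x i * u)) * cnj (\<Sum>j\<in>UNIV. B j * cis (y j * u))"
    have z: "z = (\<Sum>k\<in>K. complex_of_real (a k) * cis (\<omega> k * u))"
      by (simp add: z_def K_def \<omega>_def a_def sum_product sum.cartesian_product cis_cnj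
          cis_mult algebra_simps case_prod_unfold)
    have cnj_z: "cnj z = (\<Sum>k\<in>K. complex_of_real (a k) * cis (- \<omega> k * u))"
      by (simp add: z cis_cnj)
    have "Im z = 0"
      using Im0 that by (simp add: z_def)
    then have "z - cnj z = 0"
      by (simp add: complex_eq_iff)
    then have "(\<Sum>k\<in>K. complex_of_real (a k) * cis (\<omega> k * u))
        - (\<Sum>k\<in>K. complex_of_real (a k) * cis (- \<omega> k * u)) = 0"
      by (metis cnj_z z)
    moreover have "(\<Sum>w\<in>\<Omega>. complex_of_real (\<Sum>k\<in>{k\<in>K. \<omega> k = w}. a k) * cis (w * u))
        = (\<Sum>k\<in>K. complex_of_real (a k) * cis (\<omega> k * u))"
      by (rule sum_cis_group[OF fin]) (auto simp: \<Omega>_def)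
    moreover have "(\<Sum>w\<in>\<Omega>. complex_of_real (\<Sum>k\<in>{k\<in>K. - \<omega> k = w}. a k) * cis (w * u))
        = (\<Sum>k\<in>K. complex_of_real (a k) * cis (- \<omega> k * u))"
      by (rule sum_cis_group[OF fin]) (auto simp: \<Omega>_def)
    ultimately show ?thesis
      by (simp only: cross of_real_diff left_diff_distrib sum_subtractf)
  qed
  then have in_\<Omega>: "w \<in> \<Omega> \<Longrightarrow> complex_of_real (cross_coeff x A y B w) = 0"
    by (intro cis_sum_vanishing_on_open_imp_coeff_zero[OF fin(2) assms(1,2)]) auto
  show ?thesis
  proof (cases "w \<in> \<Omega>")
    case True
    then show ?thesis using in_\<Omega> of_real_eq_0_iff by blast
  next
    case False
    then have "{k\<in>K. \<omega> k = w} = {}" "{k\<in>K. - \<omega> k = w} = {}"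
      by (auto simp: \<Omega>_def)
    then show ?thesis by (simp only: cross sum.empty diff_self)
  qed
qed

lemma cross_coeff_eq_sum:
  fixes x A :: "'i::finite \<Rightarrow> real" and y B :: "'j::finite \<Rightarrow> real"
  shows "cross_coeff x A y B w =
    (\<Sum>i\<in>UNIV. \<Sum>j\<in>UNIV. A i * B j * (of_bool (x i - y j = w) - of_bool (y j - x i = w)))"
proof -
  have filter: "(\<Sum>(i, j) \<in> {(i, j). P i j}. A i * B j) = (\<Sum>i\<in>UNIV. \<Sum>j\<in>UNIV. A i * B j * of_bool (P i j))"
    for P :: "'i \<Rightarrow> 'j \<Rightarrow> bool"
  proof -
    have "{(i, j). P i j} = Sigma UNIV (\<lambda>i. Collect (P i))" by auto
    then show ?thesis
      by (simp add: sum.Sigma[symmetric] sum.inter_filter[symmetric] of_bool_def if_distrib cong: if_cong)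
  qed
  show ?thesis
    unfolding cross_coeff_def filter
    by (simp add: right_diff_distrib sum_subtractf)
qed

lemma
  fixes x A y B :: "bool \<Rightarrow> real"
  shows cross_coeff_Not_left: "cross_coeff (x \<circ> Not) (A \<circ> Not) y B w = cross_coeff x A y B w"
    and cross_coeff_Not_right: "cross_coeff x A (y \<circ> Not) (B \<circ> Not) w = cross_coeff x A y B w"
  by (simp_all add: cross_coeff_eq_sum UNIV_bool ac_simps)

lemma cross_coeff_bool_vanishing_ordered:
  fixes x A y B :: "bool \<Rightarrow> real"
  assumes x: "x False < x True" and y: "y False < y True"
    and pos: "\<And>i. 0 < A i" "\<And>j. 0 < B j" and "A True \<noteq> A False"
    and zero: "\<And>w. cross_coeff x A y B w = 0"
  shows "x = y \<and> A True * B False = A False * B True"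
proof -
  have coeff: "cross_coeff x A y B w =
      A True * B True * (of_bool (x True - y True = w) - of_bool (y True - x True = w))
    + A True * B False * (of_bool (x True - y False = w) - of_bool (y False - x True = w))
    + A False * B True * (of_bool (x False - y True = w) - of_bool (y True - x False = w))
    + A False * B False * (of_bool (x False - y False = w) - of_bool (y False - x False = w))" for w
    by (simp add: cross_coeff_eq_sum UNIV_bool)
  \<comment> \<open>Otherwise the largest frequency x True - y False (or y True - x False) occurs only once.\<close>
  have mid: "x True + x False = y True + y False"
  proof (rule ccontr)
    assume "x True + x False \<noteq> y True + y False"
    then consider "x True + x False > y True + y False" | "x True + x False < y True + y False"
      by linarith
    then show False
    proof cases
      case 1
      then show False
        using zero[of "x True - y False"] pos(1)[of True] pos(2)[of False] x y by (simp add: coeff)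
    next
      case 2
      then show False
        using zero[of "y True - x False"] pos(1)[of False] pos(2)[of True] x y by (simp add: coeff)
    qed
  qed
  have weights: "A True * B False = A False * B True"
    using zero[of "x True - y False"] x y mid by (simp add: coeff)
  have "x True = y True"
  proof (rule ccontr)
    assume "x True \<noteq> y True"
    then have "A True * B True = A False * B False"
      using zero[of "x True - y True"] x y mid by (simp add: coeff)
    with weights have "A True * A True * (B True * B False) = A False * A False * (B True * B False)"
      by (metis mult.assoc mult.commute)
    then have "A True * A True = A False * A False"
      using pos(2)[of True] pos(2)[of False] by simp
    then show False
      using pos(1)[of True] pos(1)[of False] \<open>A True \<noteq> A False\<close>
      by (metis abs_of_pos power2_eq_square real_sqrt_abs)
  qed
  with mid have "x = y"
    by (simp add: fun_eq_iff all_bool_eq)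
  with weights show ?thesis by simp
qed

lemma cross_coeff_bool_vanishing:
  fixes x A y B :: "bool \<Rightarrow> real"
  assumes "x False \<noteq> x True" "y False \<noteq> y True"
    and pos: "\<And>i. 0 < A i" "\<And>j. 0 < B j" and "A True \<noteq> A False"
    and zero: "\<And>w. cross_coeff x A y B w = 0"
  shows "(x = y \<and> A True * B False = A False * B True)
       \<or> (x = y \<circ> Not \<and> A True * B True = A False * B False)"
proof -
  have swap: "(x \<circ> Not) \<circ> Not = x" for x :: "bool \<Rightarrow> real" by auto
  consider "x False < x True" "y False < y True" | "x False < x True" "y True < y False"
    | "x True < x False" "y False < y True" | "x True < x False" "y True < y False"
    using assms(1,2) by linarith
  then show ?thesis
  proof cases
    case 1
    then show ?thesis using cross_coeff_bool_vanishing_ordered[of x y A B] pos assms(5) zero by blast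
  next
    case 2
    have "x = y \<circ> Not \<and> A True * B True = A False * B False"
      using cross_coeff_bool_vanishing_ordered[of x "y \<circ> Not" A "B \<circ> Not"] 2 pos assms(5) zero
      by (simp add: cross_coeff_Not_right)
    then show ?thesis ..
  next
    case 3
    have "x \<circ> Not = y \<and> A False * B False = A True * B True"
      using cross_coeff_bool_vanishing_ordered[of "x \<circ> Not" y "A \<circ> Not" B] 3 pos assms(5) zero
      by (simp add: cross_coeff_Not_left)
    then have "x = y \<circ> Not \<and> A True * B True = A False * B False"
      by (metis swap)
    then show ?thesis ..
  next
    case 4
    have "x \<circ> Not = y \<circ> Not \<and> A False * B True = A True * B False"
      using cross_coeff_bool_vanishing_ordered[of "x \<circ> Not" "y \<circ> Not" "A \<circ> Not" "B \<circ> Not"] 4 pos assms(5) zero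
      by (simp add: cross_coeff_Not_left cross_coeff_Not_right)
    then have "x = y \<and> A True * B False = A False * B True"
      by (metis swap)
    then show ?thesis ..
  qed
qed

lemma fourier_shift: "fourier (\<lambda>x. f (x - a)) u = cis (u * a) * fourier f u"
proof -
  have "fourier (\<lambda>x. f (x - a)) u
      = (LINT x|lborel. cis ((a + 1 * x) * u) * complex_of_real (f (a + 1 * x - a)))"
    unfolding fourier_def
    using lborel_integral_real_affine[of 1 "\<lambda>x. cis (x * u) * complex_of_real (f (x - a))" a] by simp
  also have "\<dots> = (LINT x|lborel. cis (u * a) * (cis (x * u) * complex_of_real (f x)))"
    by (intro Bochner_Integration.integral_cong refl) (simp add: cis_mult algebra_simps)
  also have "\<dots> = cis (u * a) * fourier f u"
    unfolding fourier_def by simp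
  finally show ?thesis .
qed

lemma fourier_even_real:
  assumes "\<And>x. f (- x) = f x"
  shows "fourier f u \<in> \<real>"
proof -
  have "cnj (fourier f u) = (LINT x|lborel. cis (- (x * u)) * complex_of_real (f x))"
    unfolding fourier_def by (simp add: cis_cnj flip: Bochner_Integration.integral_cnj)
  also have "\<dots> = (LINT x|lborel. cis (- ((0 + (-1) * x) * u)) * complex_of_real (f (0 + (-1) * x)))"
    using lborel_integral_real_affine[of "-1" "\<lambda>x. cis (- (x * u)) * complex_of_real (f x)" 0] by simp
  also have "\<dots> = fourier f u"
    unfolding fourier_def using assms by simp
  finally show ?thesis
    using Reals_cnj_iff by blast
qed

lemma integrable_fourier_integrand:
  assumes "integrable lborel f"
  shows "integrable lborel (\<lambda>x. cis (x * u) * complex_of_real (f x))"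
proof (rule Bochner_Integration.integrable_bound[OF assms])
  have [measurable]: "f \<in> borel_measurable borel"
    using assms by simp
  have [measurable]: "(\<lambda>x. cis (x * u)) \<in> borel_measurable borel"
    by (intro borel_measurable_continuous_onI continuous_intros)
  show "(\<lambda>x. cis (x * u) * complex_of_real (f x)) \<in> borel_measurable lborel"
    by simp
qed (simp add: norm_mult)

lemma fourier_linear:
  assumes "integrable lborel f" "integrable lborel g"
  shows "fourier (\<lambda>x. c * f x + d * g x) u = complex_of_real c * fourier f u + complex_of_real d * fourier g u"
  unfolding fourier_def
  using integrable_fourier_integrand[OF assms(1)] integrable_fourier_integrand[OF assms(2)]
  by (simp add: distrib_left mult.left_commute)

lemma integrable_shift:
  fixes f :: "real \<Rightarrow> 'a::{banach, second_countable_topology}"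
  shows "integrable lborel f \<Longrightarrow> integrable lborel (\<lambda>x. f (x - t))"
  using lborel_integrable_real_affine[of f 1 "- t"] by simp

lemma fourier_mixture:
  assumes "integrable lborel f"
  shows "fourier (\<lambda>x. p * f (x - a) + (1 - p) * f (x - b)) u = fourier f u * mixM (p, a, b) u"
proof -
  note shifted = integrable_shift[OF assms]
  have "fourier (\<lambda>x. p * f (x - a) + (1 - p) * f (x - b)) u
      = complex_of_real p * fourier (\<lambda>x. f (x - a)) u + complex_of_real (1 - p) * fourier (\<lambda>x. f (x - b)) u"
    by (rule fourier_linear[OF shifted shifted])
  then show ?thesis
    by (simp add: fourier_shift mixM_def algebra_simps)
qed

lemma norm_fourier_le:
  assumes "integrable lborel f"
  shows "norm (fourier f u) \<le> (LINT x|lborel. \<bar>f x\<bar>)"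
  unfolding fourier_def
  by (rule Bochner_Integration.integral_norm_bound_integral[OF integrable_fourier_integrand[OF assms] integrable_abs[OF assms]])
     (simp add: norm_mult)

lemma isCont_fourier:
  assumes "integrable lborel f"
  shows "isCont (fourier f) t"
  unfolding continuous_at_sequentially comp_def fourier_def
proof safe
  fix X :: "nat \<Rightarrow> real" assume "X \<longlonglongrightarrow> t"
  have [measurable]: "f \<in> borel_measurable borel"
    using assms by simp
  have [measurable]: "(\<lambda>x. cis (x * u)) \<in> borel_measurable borel" for u
    by (intro borel_measurable_continuous_onI continuous_intros)
  show "(\<lambda>n. LINT x|lborel. cis (x * X n) * complex_of_real (f x))
      \<longlonglongrightarrow> (LINT x|lborel. cis (x * t) * complex_of_real (f x))"
    by (rule integral_dominated_convergence[where w = "\<lambda>x. \<bar>f x\<bar>"])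
       (auto intro!: tendsto_intros \<open>X \<longlonglongrightarrow> t\<close> integrable_abs assms simp: norm_mult)
qed

lemma norm_mixM_ge: "0 \<le> p \<Longrightarrow> p \<le> 1 \<Longrightarrow> \<bar>1 - 2 * p\<bar> \<le> norm (mixM (p, a, b) u)"
  using norm_diff_ineq[of "complex_of_real (1 - p) * cis (u * b)" "complex_of_real p * cis (u * a)"]
    norm_diff_ineq[of "complex_of_real p * cis (u * a)" "complex_of_real (1 - p) * cis (u * b)"]
  by (simp add: mixM_def norm_mult add.commute abs_le_iff del: of_real_diff)

lemma mixM_nonzero: "0 \<le> p \<Longrightarrow> p < 1/2 \<Longrightarrow> mixM (p, a, b) u \<noteq> 0"
  using norm_mixM_ge[of p a b u] by auto

lemma isCont_mixM: "isCont (mixM (p, a, b)) u"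
  unfolding mixM_def prod.case cis_conv_exp by (intro continuous_intros)

lemma mixM_as_sum:
  "mixM (p, a, b) u
     = (\<Sum>i\<in>UNIV. complex_of_real (if i then p else 1 - p) * cis ((if i then a else b) * u))"
  by (simp add: mixM_def UNIV_bool mult.commute)

lemma mixM_eq_if_Im_ratio_vanishes_on_open:
  assumes "0 < p0" "p0 < 1/2" "0 < p" "p < 1/2" "\<alpha>0 \<noteq> \<beta>0" "a \<noteq> b"
    and "open S" "u0 \<in> S"
    and Im0: "\<forall>u\<in>S. Im (mixM (p0, \<alpha>0, \<beta>0) u / mixM (p, a, b) u) = 0"
  shows "(p, a, b) = (p0, \<alpha>0, \<beta>0)"
proof -
  define x where "x i = (if i then \<alpha>0 else \<beta>0)" for i
  define A where "A i = (if i then p0 else 1 - p0)" for i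
  define y where "y i = (if i then a else b)" for i
  define B where "B i = (if i then p else 1 - p)" for i
  have "mixM (p0, \<alpha>0, \<beta>0) u = (\<Sum>i\<in>UNIV. complex_of_real (A i) * cis (x i * u))"
    and "mixM (p, a, b) u = (\<Sum>i\<in>UNIV. complex_of_real (B i) * cis (y i * u))" for u
    by (simp_all add: mixM_as_sum A_def B_def x_def y_def)
  moreover have "Im (mixM (p0, \<alpha>0, \<beta>0) u * cnj (mixM (p, a, b) u)) = 0" if "u \<in> S" for u
    using Im0 that Im_complex_div_eq_0 by blast
  ultimately have "cross_coeff x A y B w = 0" for w
    by (intro cross_coeff_eq_0_if_Im_vanishes_on_open[OF assms(7,8)]) simp
  moreover have "x False \<noteq> x True" "y False \<noteq> y True" "0 < A i" "0 < B i" "A True \<noteq> A False" for i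
    using assms by (auto simp: x_def y_def A_def B_def)
  ultimately consider "x = y" "A True * B False = A False * B True"
    | "x = y \<circ> Not" "A True * B True = A False * B False"
    using cross_coeff_bool_vanishing by blast
  then show ?thesis
  proof cases
    case 1
    have "\<alpha>0 = a" "\<beta>0 = b" "p0 * (1 - p) = (1 - p0) * p"
      using fun_cong[OF 1(1), of True] fun_cong[OF 1(1), of False] 1(2)
      by (simp_all add: x_def y_def A_def B_def)
    then show ?thesis
      by (simp add: algebra_simps)
  next
    case 2
    moreover have "p0 * p < (1 - p0) * (1 - p)"
      using assms by (intro mult_strict_mono) auto
    ultimately show ?thesis
      by (simp add: A_def B_def)
  qed
qed

lemma mixM_eq_if_Im_fourier_ratio_vanishes:
  assumes "integrable lborel f" "fourier f 0 \<noteq> 0" "\<And>u. fourier f u \<in> \<real>"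
    and "0 < p0" "p0 < 1/2" "0 < p" "p < 1/2" "\<alpha>0 \<noteq> \<beta>0" "a \<noteq> b"
    and Im0: "\<And>u. Im (fourier f u * mixM (p0, \<alpha>0, \<beta>0) u / mixM (p, a, b) u) = 0"
  shows "(p, a, b) = (p0, \<alpha>0, \<beta>0)"
proof -
  obtain d where "0 < d" and nz: "\<And>u. dist 0 u < d \<Longrightarrow> fourier f u \<noteq> 0"
    using continuous_at_avoid[OF isCont_fourier[OF assms(1)] assms(2)] by blast
  have "Im (mixM (p0, \<alpha>0, \<beta>0) u / mixM (p, a, b) u) = 0" if "u \<in> ball 0 d" for u
  proof -
    obtain r where r: "fourier f u = complex_of_real r"
      using assms(3) Reals_cases by metis
    have "r \<noteq> 0"
      using nz that r by auto
    have Im_scale: "Im (complex_of_real r * z) = r * Im z" for z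
      by simp
    have "r * Im (mixM (p0, \<alpha>0, \<beta>0) u / mixM (p, a, b) u)
        = Im (complex_of_real r * (mixM (p0, \<alpha>0, \<beta>0) u / mixM (p, a, b) u))"
      by (rule Im_scale[symmetric])
    also have "\<dots> = Im (fourier f u * mixM (p0, \<alpha>0, \<beta>0) u / mixM (p, a, b) u)"
      by (simp add: r)
    also have "\<dots> = 0"
      by (rule Im0)
    finally show ?thesis
      using \<open>r \<noteq> 0\<close> by simp
  qed
  then show ?thesis
    by (intro mixM_eq_if_Im_ratio_vanishes_on_open[of _ _ _ _ _ _ "ball 0 d" 0]) (use assms \<open>0 < d\<close> in auto)
qed

lemma integral_eq_0_imp_zero_if_full_support:
  fixes h :: "real \<Rightarrow> real"
  assumes sets: "sets W = sets borel" and supp: "measure_support W = UNIV"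
    and "integrable W h" "\<And>u. 0 \<le> h u" "continuous_on UNIV h"
    and "(LINT u|W. h u) = 0"
  shows "h u = 0"
proof (rule ccontr)
  assume "h u \<noteq> 0"
  moreover have "isCont h u"
    using \<open>continuous_on UNIV h\<close> continuous_on_eq_continuous_at[OF open_UNIV] by blast
  ultimately obtain e where "0 < e" and e: "\<And>y. dist u y < e \<Longrightarrow> h y \<noteq> 0"
    using continuous_at_avoid by blast
  have "AE y in W. h y = 0"
    using integral_nonneg_eq_0_iff_AE[OF \<open>integrable W h\<close>] assms(4,6) by simp
  then have "AE y in W. y \<notin> ball u e"
    by eventually_elim (use e in auto)
  moreover have "ball u e \<in> sets W" "{y \<in> space W. \<not> y \<notin> ball u e} = ball u e"
    using sets sets_eq_imp_space_eq[OF sets] by auto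
  ultimately have "emeasure W (ball u e) = 0"
    using AE_iff_measurable[of "ball u e" W "\<lambda>y. y \<notin> ball u e"] by simp
  moreover have "0 < emeasure W (ball u e)"
    using supp \<open>0 < e\<close> unfolding measure_support_def by auto
  ultimately show False by simp
qed

lemma contrastS_eq_0_iff:
  assumes fin: "finite_measure W" and sets: "sets W = sets borel" and supp: "measure_support W = UNIV"
    and g: "integrable lborel g" and p: "0 \<le> p" "p < 1/2"
  shows "contrastS W g (p, a, b) = 0 \<longleftrightarrow> (\<forall>u. Im (fourier g u / mixM (p, a, b) u) = 0)"
proof -
  define q where "q u = Im (fourier g u / mixM (p, a, b) u)" for u
  define C where "C = (LINT x|lborel. \<bar>g x\<bar>) / (1 - 2 * p)"
  have q_cont: "continuous_on UNIV q"
    unfolding q_def using mixM_nonzero[OF p]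
    by (intro continuous_at_imp_continuous_on ballI continuous_intros isCont_fourier isCont_mixM g)
  have q_bound: "\<bar>q u\<bar> \<le> C" for u
  proof -
    have "\<bar>q u\<bar> \<le> norm (fourier g u / mixM (p, a, b) u)"
      unfolding q_def by (rule abs_Im_le_cmod)
    also have "\<dots> = norm (fourier g u) / norm (mixM (p, a, b) u)"
      by (rule norm_divide)
    also have "\<dots> \<le> C"
      unfolding C_def
    proof (rule frac_le)
      show "norm (fourier g u) \<le> (LINT x|lborel. \<bar>g x\<bar>)"
        by (rule norm_fourier_le[OF g])
      show "1 - 2 * p \<le> norm (mixM (p, a, b) u)"
        using norm_mixM_ge[of p a b u] p by simp
    qed (use p in auto)
    finally show ?thesis .
  qed
  have "(\<lambda>u. (q u)\<^sup>2) \<in> borel_measurable borel"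
    using q_cont by (intro borel_measurable_continuous_onI continuous_intros)
  then have "(\<lambda>u. (q u)\<^sup>2) \<in> borel_measurable W"
    using measurable_cong_sets[OF sets refl] by blast
  moreover have "norm ((q u)\<^sup>2) \<le> C\<^sup>2" for u
  proof -
    have "\<bar>q u\<bar> \<le> \<bar>C\<bar>"
      using q_bound[of u] by linarith
    then show ?thesis
      by (simp add: abs_le_square_iff)
  qed
  ultimately have int: "integrable W (\<lambda>u. (q u)\<^sup>2)"
    by (intro finite_measure.integrable_const_bound[OF fin]) auto
  have "(LINT u|W. (q u)\<^sup>2) = 0 \<longleftrightarrow> (\<forall>u. q u = 0)"
  proof
    assume integral_0: "(LINT u|W. (q u)\<^sup>2) = 0"
    have "continuous_on UNIV (\<lambda>u. (q u)\<^sup>2)"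
      using q_cont by (intro continuous_intros)
    then have "(q u)\<^sup>2 = 0" for u
      by (rule integral_eq_0_imp_zero_if_full_support[OF sets supp int zero_le_power2 _ integral_0])
    then show "\<forall>u. q u = 0" by simp
  qed simp
  then show ?thesis
    unfolding contrastS_def q_def .
qed

theorem proposition1:
  fixes f :: "real \<Rightarrow> real"
    and \<Theta> :: "(real \<times> real \<times> real) set"
    and p0 \<alpha>0 \<beta>0 :: real
    and W :: "real measure"
  assumes dens: "prob_density f"
    and L2: "integrable lborel (\<lambda>x. (f x)\<^sup>2)"
    and symm: "\<forall>x. f x = f (- x)"
    and compact: "compact \<Theta>"
    and Theta_sub: "\<Theta> \<subseteq> {(p, a, b). 0 < p \<and> p < 1/2 \<and> a \<noteq> b}"
    and theta0: "(p0, \<alpha>0, \<beta>0) \<in> \<Theta>"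
    and W_prob: "prob_space W"
    and W_sets: "sets W = sets borel"
    and W_ac: "absolutely_continuous lborel W"
    and W_supp: "measure_support W = UNIV"
  shows "\<forall>\<theta>\<in>\<Theta>.
           0 \<le> contrastS W (\<lambda>x. p0 * f (x - \<alpha>0) + (1 - p0) * f (x - \<beta>0)) \<theta>
         \<and> (contrastS W (\<lambda>x. p0 * f (x - \<alpha>0) + (1 - p0) * f (x - \<beta>0)) \<theta> = 0
              \<longleftrightarrow> \<theta> = (p0, \<alpha>0, \<beta>0))"
proof
  fix \<theta> assume "\<theta> \<in> \<Theta>"
  then obtain p a b where \<theta>: "\<theta> = (p, a, b)" "0 < p" "p < 1/2" "a \<noteq> b"
    using Theta_sub by auto
  have \<theta>0: "0 < p0" "p0 < 1/2" "\<alpha>0 \<noteq> \<beta>0"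
    using theta0 Theta_sub by auto
  have f_int: "integrable lborel f" and "fourier f 0 = 1"
    using dens by (auto simp: prob_density_def fourier_def)
  have f_hat_real: "fourier f u \<in> \<real>" for u
    using symm by (intro fourier_even_real) simp
  define g where "g = (\<lambda>x. p0 * f (x - \<alpha>0) + (1 - p0) * f (x - \<beta>0))"
  have "integrable lborel g"
    unfolding g_def by (intro Bochner_Integration.integrable_add integrable_mult_right integrable_shift f_int)
  then have S0_iff: "contrastS W g \<theta> = 0
      \<longleftrightarrow> (\<forall>u. Im (fourier f u * mixM (p0, \<alpha>0, \<beta>0) u / mixM \<theta> u) = 0)"
    using contrastS_eq_0_iff[OF prob_space.finite_measure[OF W_prob] W_sets W_supp] \<theta>
    by (simp add: g_def fourier_mixture[OF f_int])
  show "0 \<le> contrastS W g \<theta> \<and> (contrastS W g \<theta> = 0 \<longleftrightarrow> \<theta> = (p0, \<alpha>0, \<beta>0))"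
  proof (intro conjI iffI)
    show "0 \<le> contrastS W g \<theta>"
      unfolding contrastS_def by (intro Bochner_Integration.integral_nonneg) simp
  next
    assume "contrastS W g \<theta> = 0"
    then show "\<theta> = (p0, \<alpha>0, \<beta>0)"
      using mixM_eq_if_Im_fourier_ratio_vanishes[OF f_int _ f_hat_real \<theta>0(1,2) \<theta>(2,3) \<theta>0(3) \<theta>(4)]
        \<open>fourier f 0 = 1\<close> S0_iff \<theta>(1) by simp
  next
    assume "\<theta> = (p0, \<alpha>0, \<beta>0)"
    then show "contrastS W g \<theta> = 0"
      using S0_iff f_hat_real mixM_nonzero[of p0 \<alpha>0 \<beta>0] \<theta>0 by (simp add: complex_is_Real_iff)
  qed
qed

end
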